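(* The set of $\mathcal{P}$-positions of the Wythoff variant with terminal set $T_5 = \{(x,y) \in \mathbb{Z}_{\ge 0}^2 : x+y \le 5\}$ is exactly $P_5 = T_5 \cup \{(b_n,a_n) : n \in \mathbb{N}\} \cup \{(a_n,b_n) : n \in \mathbb{N}\}$.
   Context: Positions are pairs $(x,y) \in \mathbb{Z}_{\ge 0}^2$. In the Wythoff variant with terminal set $T_5$, from a position $(x,y) \notin T_5$ a move goes to any position in $\{(u,y) : 0 \le u < x\} \cup \{(x,v) : 0 \le v < y\} \cup \{(x-t,y-t) : 1 \le t \le \min(x,y)\}$; positions in $T_5$ have no moves. Players alternate; a player with no move loses (the player who moves into $T_5$ wins). A $\mathcal{P}$-position is one from which the previous player wins with optimal play; equivalently a position is $\mathcal{P}$ iff every move from it leads to a non-$\mathcal{P}$ position. Sequences: Fibonacci numbers $F_1 = F_2 = 1$, $F_{i+2} = F_{i+1} + F_i$. Let $\sigma$ be the substitution on finite sequences over $\{1,2\}$ replacing each entry $1$ by $2$ and each entry $2$ by $2,1$. Let $C_{1,1} = (1)$, $C_{i+1,1} = \sigma(C_{i,1})$. For $i \in \mathbb{N}$ let $C_i$ be the concatenation of five copies of $C_{i,1}$. Let $(c_n)_{n \in \mathbb{N}}$ be the concatenation of $C_1, C_2, C_3, \dots$ in order, $d_n = c_n + 1$, $a_1 = 6$, $a_n = 6 + \sum_{i=1}^{n-1} c_i$, $b_1 = 12$, $b_n = 12 + \sum_{i=1}^{n-1} d_i$. *)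

theory Defs
  imports Main
begin

definition T5 :: "(nat \<times> nat) set" where
  "T5 = {(x, y). x + y \<le> 5}"

definition moves :: "nat \<times> nat \<Rightarrow> (nat \<times> nat) set" where
  "moves p = (if p \<in> T5 then {} else
     (case p of (x, y) \<Rightarrow>
        {(u, y) | u. u < x} \<union> {(x, v) | v. v < y}
        \<union> {(x - t, y - t) | t. 1 \<le> t \<and> t \<le> min x y}))"

lemma moves_decr: "q \<in> moves p \<Longrightarrow> fst q + snd q < fst p + snd p"
  by (cases p) (auto simp: moves_def split: if_splits)

function isP :: "nat \<times> nat \<Rightarrow> bool" where
  "isP p = (\<forall>q \<in> moves p. \<not> isP q)"
  by auto
termination
  by (relation "measure (\<lambda>p. fst p + snd p)") (auto dest: moves_decr)

definition sigma :: "nat list \<Rightarrow> nat list" where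
  "sigma xs = concat (map (\<lambda>e. if e = 1 then [2] else [2, 1]) xs)"

fun Ci1 :: "nat \<Rightarrow> nat list" where
  "Ci1 0 = []"
| "Ci1 (Suc 0) = [1]"
| "Ci1 (Suc (Suc i)) = sigma (Ci1 (Suc i))"

definition Cblk :: "nat \<Rightarrow> nat list" where
  "Cblk i = concat (replicate 5 (Ci1 i))"

text \<open>c n for n \<ge> 1 (1-indexed): the n-th entry of C_1 C_2 C_3 ...; each block has length
  at least 5, so the first n blocks suffice.\<close>
definition c :: "nat \<Rightarrow> nat" where
  "c n = concat (map Cblk [1..<n + 1]) ! (n - 1)"

definition d :: "nat \<Rightarrow> nat" where
  "d n = c n + 1"

definition a :: "nat \<Rightarrow> nat" where
  "a n = 6 + (\<Sum>i=1..<n. c i)"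

definition b :: "nat \<Rightarrow> nat" where
  "b n = 12 + (\<Sum>i=1..<n. d i)"

end

theory Submission
  imports Defs
begin

text \<open>The word c_1 c_2 c_3 ... is 1 1 1 1 1 followed by its own image under sigma, and a k is
  the position at which the image of the k-th letter begins. Hence c (a k) = 2, and
  c (a k + 1) = 1 whenever c k = 2; this yields b k = a (a k) + 1 and b k - a k = k + 5, so that
  a and b are complementary sequences covering every number >= 6 exactly once. Consequently,
  outside T5 the set P5 meets every row, column and diagonal at most once and no move leads from
  it into T5, so no move stays inside P5, while every other position has a move into P5. Such a
  set is exactly the set of P-positions.\<close>

lemma sigma_Nil [simp]: "sigma [] = []"
  by (simp add: sigma_def)

lemma sigma_Cons [simp]: "sigma (x # xs) = (if x = 1 then [2] else [2, 1]) @ sigma xs"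
  by (simp add: sigma_def)

lemma sigma_append [simp]: "sigma (xs @ ys) = sigma xs @ sigma ys"
  by (simp add: sigma_def)

lemma sigma_concat: "sigma (concat xss) = concat (map sigma xss)"
  by (induction xss) auto

lemma set_sigma: "set (sigma xs) \<subseteq> {1, 2}"
  by (induction xs) auto

lemma length_sigma_ge: "length xs \<le> length (sigma xs)"
  by (induction xs) auto

lemma drop_sum_list_take_sigma:
  assumes "set xs \<subseteq> {1, 2}"
  shows "drop (sum_list (take j xs)) (sigma xs) = sigma (drop j xs)"
  using assms
proof (induction xs arbitrary: j)
  case (Cons x xs)
  then show ?case
    by (cases j) (auto simp: numeral_2_eq_2)
qed simp

lemma Ci1_Suc: "i \<ge> 1 \<Longrightarrow> Ci1 (Suc i) = sigma (Ci1 i)"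
  by (cases i) auto

lemma set_Ci1: "set (Ci1 i) \<subseteq> {1, 2}"
  using set_sigma by (cases i rule: Ci1.cases) auto

lemma Ci1_nonempty: "i \<ge> 1 \<Longrightarrow> Ci1 i \<noteq> []"
proof (induction i rule: nat_induct_at_least)
  case (Suc i)
  then show ?case
    using Ci1_Suc[of i] length_sigma_ge[of "Ci1 i"] by auto
qed simp

lemma Cblk_1: "Cblk 1 = replicate 5 1"
  by (simp add: Cblk_def numeral_eq_Suc)

lemma Cblk_Suc: "i \<ge> 1 \<Longrightarrow> Cblk (Suc i) = sigma (Cblk i)"
  by (simp add: Cblk_def sigma_concat Ci1_Suc)

lemma set_Cblk: "set (Cblk i) \<subseteq> {1, 2}"
  using set_Ci1 by (auto simp: Cblk_def)

lemma Cblk_nonempty: "i \<ge> 1 \<Longrightarrow> Cblk i \<noteq> []"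
  using Ci1_nonempty by (simp add: Cblk_def numeral_eq_Suc)

definition c_prefix :: "nat \<Rightarrow> nat list" where
  "c_prefix N = concat (map Cblk [1..<N + 1])"

lemma c_prefix_0 [simp]: "c_prefix 0 = []"
  by (simp add: c_prefix_def)

lemma c_prefix_Suc: "c_prefix (Suc N) = c_prefix N @ Cblk (Suc N)"
  by (simp add: c_prefix_def)

lemma c_prefix_Suc_eq_sigma: "c_prefix (Suc N) = replicate 5 1 @ sigma (c_prefix N)"
proof (induction N)
  case 0
  then show ?case
    using Cblk_1 by (simp add: c_prefix_Suc)
next
  case (Suc N)
  have "c_prefix (Suc (Suc N)) = c_prefix (Suc N) @ Cblk (Suc (Suc N))"
    by (rule c_prefix_Suc)
  also have "\<dots> = replicate 5 1 @ sigma (c_prefix N @ Cblk (Suc N))"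
    using Suc Cblk_Suc[of "Suc N"] by simp
  also have "\<dots> = replicate 5 1 @ sigma (c_prefix (Suc N))"
    by (simp only: c_prefix_Suc)
  finally show ?case .
qed

lemma length_c_prefix_ge: "N \<le> length (c_prefix N)"
proof (induction N)
  case (Suc N)
  have "0 < length (Cblk (Suc N))"
    using Cblk_nonempty[of "Suc N"] by simp
  with Suc show ?case
    unfolding c_prefix_Suc length_append by linarith
qed simp

lemma set_c_prefix: "set (c_prefix N) \<subseteq> {1, 2}"
  using set_Cblk by (auto simp: c_prefix_def)

lemma c_prefix_extends: "N \<le> M \<Longrightarrow> \<exists>ys. c_prefix M = c_prefix N @ ys"
proof (induction M rule: dec_induct)
  case (step M)
  then show ?case
    by (auto simp: c_prefix_Suc)
qed simp

lemma c_eq_nth_c_prefix: "c n = c_prefix n ! (n - 1)"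
  by (simp add: c_def c_prefix_def)

lemma nth_c_prefix:
  assumes "1 \<le> n" "n \<le> length (c_prefix N)"
  shows "c_prefix N ! (n - 1) = c n"
proof (cases "n \<le> N")
  case True
  then obtain ys where "c_prefix N = c_prefix n @ ys"
    using c_prefix_extends by blast
  moreover have "n - 1 < length (c_prefix n)"
    using length_c_prefix_ge[of n] assms(1) by simp
  ultimately show ?thesis
    by (simp add: c_eq_nth_c_prefix nth_append)
next
  case False
  then obtain ys where "c_prefix n = c_prefix N @ ys"
    using c_prefix_extends[of N n] by auto
  moreover have "n - 1 < length (c_prefix N)"
    using assms by simp
  ultimately show ?thesis
    by (simp add: c_eq_nth_c_prefix nth_append)
qed

lemma take_c_prefix:
  "m \<le> length (c_prefix N) \<Longrightarrow> take m (c_prefix N) = map c [1..<Suc m]"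
proof (rule nth_equalityI)
  fix i
  assume "m \<le> length (c_prefix N)" "i < length (take m (c_prefix N))"
  then show "take m (c_prefix N) ! i = map c [1..<Suc m] ! i"
    using nth_c_prefix[of "Suc i" N] by (simp add: nth_map_upt del: upt_Suc)
qed simp

lemma c_cases: "c n = 1 \<or> c n = 2" if "n \<ge> 1"
proof -
  have "n - 1 < length (c_prefix n)"
    using length_c_prefix_ge[of n] that by simp
  then have "c_prefix n ! (n - 1) \<in> {1, 2}"
    using set_c_prefix nth_mem by blast
  then show ?thesis
    by (simp add: c_eq_nth_c_prefix)
qed

lemma c_prefix_1: "c_prefix 1 = replicate 5 1"
  using c_prefix_Suc[of 0] Cblk_1 by simp

lemma c_initial: "1 \<le> n \<Longrightarrow> n \<le> 5 \<Longrightarrow> c n = 1"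
  using nth_c_prefix[of n 1] c_prefix_1 by simp

lemma a_Suc: "k \<ge> 1 \<Longrightarrow> a (Suc k) = a k + c k"
  by (simp add: a_def)

lemma b_Suc: "k \<ge> 1 \<Longrightarrow> b (Suc k) = b k + c k + 1"
  by (simp add: b_def d_def)

lemma a_less_a_Suc: "k \<ge> 1 \<Longrightarrow> a k < a (Suc k)"
  using a_Suc c_cases by fastforce

lemma a_ge: "k \<ge> 1 \<Longrightarrow> k + 5 \<le> a k"
proof (induction k rule: nat_induct_at_least)
  case (Suc k)
  then show ?case
    using a_less_a_Suc[of k] by simp
qed (simp add: a_def)

lemma strict_mono_on_a: "strict_mono_on {1..} a"
proof (rule strict_mono_onI)
  fix m n :: nat
  assume m: "m \<in> {1..}" and "n \<in> {1..}" "m < n"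
  then have "Suc m \<le> n"
    by simp
  then show "a m < a n"
  proof (induction n rule: dec_induct)
    case (step n)
    then show ?case
      using a_less_a_Suc[of n] m by simp
  qed (use a_less_a_Suc m in simp)
qed

lemma b_eq_a_plus: "k \<ge> 1 \<Longrightarrow> b k = a k + k + 5"
proof (induction k rule: nat_induct_at_least)
  case (Suc k)
  then show ?case
    using a_Suc[of k] b_Suc[of k] by simp
qed (simp add: a_def b_def)

lemma strict_mono_on_b: "strict_mono_on {1..} b"
  using strict_mono_onD[OF strict_mono_on_a] b_eq_a_plus
  by (intro strict_mono_onI) (simp add: add_less_mono)

lemma a_less_a_iff: "1 \<le> m \<Longrightarrow> 1 \<le> n \<Longrightarrow> a m < a n \<longleftrightarrow> m < n"
  by (simp add: strict_mono_on_less[OF strict_mono_on_a])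

lemma a_eq_a_iff: "1 \<le> m \<Longrightarrow> 1 \<le> n \<Longrightarrow> a m = a n \<longleftrightarrow> m = n"
  by (simp add: strict_mono_on_eq[OF strict_mono_on_a])

lemma b_eq_b_iff: "1 \<le> m \<Longrightarrow> 1 \<le> n \<Longrightarrow> b m = b n \<longleftrightarrow> m = n"
  by (simp add: strict_mono_on_eq[OF strict_mono_on_b])

lemma a_initial: "1 \<le> n \<Longrightarrow> n \<le> 6 \<Longrightarrow> a n = n + 5"
proof (induction n rule: nat_induct_at_least)
  case (Suc n)
  then show ?case
    using a_Suc[of n] c_initial[of n] by simp
qed (simp add: a_def)

lemma c_a_plus_eq_sigma:
  assumes k: "k \<ge> 1" and i: "i < length (sigma [c k])"
  shows "c (a k + i) = sigma [c k] ! i"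
proof -
  define xs where "xs = c_prefix (a k)"
  define s where "s = sum_list (take (k - 1) xs)"
  have k_len: "k - 1 < length xs"
    using length_c_prefix_ge[of "a k"] a_ge[OF k] unfolding xs_def by linarith
  have "take (k - 1) xs = map c [1..<k]"
    using take_c_prefix[of "k - 1" "a k"] k_len k unfolding xs_def by simp
  then have a_eq: "a k = 6 + s"
    unfolding a_def s_def by (simp add: sum_set_upt_conv_sum_list_nat[symmetric])
  have "drop (k - 1) xs = c k # drop k xs"
    using Cons_nth_drop_Suc[OF k_len] nth_c_prefix[of k "a k"] k k_len unfolding xs_def by simp
  moreover have "drop s (sigma xs) = sigma (drop (k - 1) xs)"
    unfolding s_def xs_def using set_c_prefix by (rule drop_sum_list_take_sigma)
  ultimately have drop_s: "drop s (sigma xs) = sigma [c k] @ sigma (drop k xs)"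
    by simp
  then have "i < length (drop s (sigma xs))"
    using i by (simp del: sigma_Cons)
  then have s_i: "s + i < length (sigma xs)"
    by simp
  have "c (a k + i) = c_prefix (Suc (a k)) ! (a k + i - 1)"
    using nth_c_prefix[of "a k + i" "Suc (a k)"] s_i a_eq
    unfolding c_prefix_Suc_eq_sigma xs_def by simp
  also have "\<dots> = (replicate 5 1 @ sigma xs) ! (5 + (s + i))"
    unfolding c_prefix_Suc_eq_sigma xs_def a_eq by simp
  also have "\<dots> = drop s (sigma xs) ! i"
    using s_i by (simp add: nth_append)
  finally show ?thesis
    using drop_s i by (simp add: nth_append)
qed

lemma c_a: "k \<ge> 1 \<Longrightarrow> c (a k) = 2"
  using c_a_plus_eq_sigma[of k 0] by simp

lemma c_a_Suc: "k \<ge> 1 \<Longrightarrow> c k = 2 \<Longrightarrow> c (a k + 1) = 1"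
  using c_a_plus_eq_sigma[of k 1] by simp

lemma b_eq_a_a_plus_1: "k \<ge> 1 \<Longrightarrow> b k = a (a k) + 1"
proof (induction k rule: nat_induct_at_least)
  case base
  then show ?case
    using a_initial[of 6] by (simp add: a_def b_def)
next
  case (Suc k)
  have ak: "a k \<ge> 1"
    using a_ge[OF Suc.hyps] by simp
  have a_Suc_ak: "a (Suc (a k)) = a (a k) + 2"
    using a_Suc[OF ak] c_a[OF Suc.hyps] by simp
  show ?case
  proof (cases "c k = 1")
    case True
    then show ?thesis
      using Suc a_Suc[of k] b_Suc[of k] a_Suc_ak by simp
  next
    case False
    then have "c k = 2"
      using c_cases Suc.hyps by blast
    then have "a (Suc (Suc (a k))) = a (a k) + 3"
      using a_Suc[of "Suc (a k)"] a_Suc_ak c_a_Suc[OF Suc.hyps] by simp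
    then show ?thesis
      using Suc a_Suc[of k] b_Suc[of k] \<open>c k = 2\<close> by simp
  qed
qed

lemma a_neq_b: "1 \<le> j \<Longrightarrow> 1 \<le> k \<Longrightarrow> a j \<noteq> b k"
proof
  assume j: "1 \<le> j" and k: "1 \<le> k" and eq: "a j = b k"
  have ak: "a k \<ge> 1"
    using a_ge[OF k] by simp
  have "a (a k) < a j"
    using eq b_eq_a_a_plus_1[OF k] by simp
  moreover have "a j < a (Suc (a k))"
    using eq b_eq_a_a_plus_1[OF k] a_Suc[OF ak] c_a[OF k] by simp
  ultimately show False
    using a_less_a_iff[OF ak j] a_less_a_iff[OF j] by simp
qed

lemma a_bracket: "m \<ge> 6 \<Longrightarrow> \<exists>j\<ge>1. a j \<le> m \<and> m < a (Suc j)"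
proof (induction m rule: nat_induct_at_least)
  case base
  show ?case
    using a_initial[of 1] a_initial[of 2] by (intro exI[of _ 1]) (simp add: numeral_2_eq_2)
next
  case (Suc m)
  then obtain j where j: "j \<ge> 1" "a j \<le> m" "m < a (Suc j)"
    by blast
  show ?case
  proof (cases "Suc m < a (Suc j)")
    case True
    then show ?thesis
      using j by auto
  next
    case False
    then show ?thesis
      using j a_less_a_Suc[of "Suc j"] by (intro exI[of _ "Suc j"]) simp
  qed
qed

lemma between_a_a_Suc: "1 \<le> j \<Longrightarrow> a j < m \<Longrightarrow> m < a (Suc j) \<Longrightarrow> m = a j + 1 \<and> c j = 2"
  using a_Suc[of j] c_cases[of j] by auto

lemma c_eq_2_imp_in_range_a:
  assumes n: "n \<ge> 1" and c_n: "c n = 2"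
  shows "\<exists>k\<ge>1. n = a k"
proof -
  have "n \<ge> 6"
    using c_initial[OF n] c_n by (cases "n \<le> 5") auto
  then obtain j where j: "j \<ge> 1" "a j \<le> n" "n < a (Suc j)"
    using a_bracket by blast
  have "n = a j"
  proof (rule ccontr)
    assume "n \<noteq> a j"
    then have "n = a j + 1" "c j = 2"
      using between_a_a_Suc[of j n] j by auto
    then show False
      using c_a_Suc[of j] j c_n by simp
  qed
  then show ?thesis
    using j by blast
qed

lemma ge_6_eq_a_or_b:
  assumes "m \<ge> 6"
  shows "\<exists>k\<ge>1. m = a k \<or> m = b k"
proof -
  obtain j where j: "j \<ge> 1" "a j \<le> m" "m < a (Suc j)"
    using a_bracket assms by blast
  show ?thesis
  proof (cases "m = a j")
    case True
    then show ?thesis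
      using j by blast
  next
    case False
    then have m: "m = a j + 1" "c j = 2"
      using between_a_a_Suc[of j m] j by auto
    then obtain k where "k \<ge> 1" "j = a k"
      using c_eq_2_imp_in_range_a j by blast
    then show ?thesis
      using b_eq_a_a_plus_1 m by auto
  qed
qed

lemma isP_iff_in_kernel:
  assumes independent: "\<And>p q. p \<in> K \<Longrightarrow> q \<in> moves p \<Longrightarrow> q \<notin> K"
    and absorbing: "\<And>p. p \<notin> K \<Longrightarrow> \<exists>q\<in>moves p. q \<in> K"
  shows "isP p \<longleftrightarrow> p \<in> K"
proof (induction p rule: isP.induct)
  case (1 p)
  have "isP p \<longleftrightarrow> (\<forall>q\<in>moves p. \<not> isP q)"
    by (rule isP.simps)
  also have "\<dots> \<longleftrightarrow> (\<forall>q\<in>moves p. q \<notin> K)"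
    using 1 by blast
  also have "\<dots> \<longleftrightarrow> p \<in> K"
    using independent absorbing by blast
  finally show ?case .
qed

lemma mem_T5 [simp]: "(x, y) \<in> T5 \<longleftrightarrow> x + y \<le> 5"
  by (simp add: T5_def)

lemma mem_moves:
  "(x, y) \<notin> T5 \<Longrightarrow> q \<in> moves (x, y) \<longleftrightarrow>
     (\<exists>u<x. q = (u, y)) \<or> (\<exists>v<y. q = (x, v)) \<or>
     (\<exists>t. 1 \<le> t \<and> t \<le> min x y \<and> q = (x - t, y - t))"
  by (auto simp: moves_def)

lemma diagonal_mem_moves:
  "(x, y) \<notin> T5 \<Longrightarrow> 1 \<le> t \<Longrightarrow> t \<le> min x y \<Longrightarrow> (x - t, y - t) \<in> moves (x, y)"
  by (auto simp: mem_moves)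

lemma swap_mem_moves_swap: "prod.swap q \<in> moves (prod.swap p) \<longleftrightarrow> q \<in> moves p"
  by (cases p; cases q) (auto simp: moves_def T5_def min.commute add.commute)

definition P5 :: "(nat \<times> nat) set" where
  "P5 = T5 \<union> {(b n, a n) | n. n \<ge> 1} \<union> {(a n, b n) | n. n \<ge> 1}"

lemma mem_P5_off_T5:
  "(x, y) \<in> P5 - T5 \<longleftrightarrow> (\<exists>n\<ge>1. (x, y) = (a n, b n) \<or> (x, y) = (b n, a n))"
proof -
  have "(a n, b n) \<notin> T5" "(b n, a n) \<notin> T5" if "n \<ge> 1" for n
    using a_ge[OF that] that by simp_all
  then show ?thesis
    unfolding P5_def by blast
qed

lemma swap_mem_P5: "prod.swap p \<in> P5 \<longleftrightarrow> p \<in> P5"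
  unfolding P5_def by (cases p) auto

lemma P5_off_T5_row_unique:
  assumes "(x, y) \<in> P5 - T5" "(u, y) \<in> P5 - T5"
  shows "u = x"
proof -
  obtain n where n: "n \<ge> 1" "(x, y) = (a n, b n) \<or> (x, y) = (b n, a n)"
    using assms(1) mem_P5_off_T5 by blast
  obtain m where m: "m \<ge> 1" "(u, y) = (a m, b m) \<or> (u, y) = (b m, a m)"
    using assms(2) mem_P5_off_T5 by blast
  from n(2) m(2) show ?thesis
    using a_neq_b[OF n(1) m(1)] a_neq_b[OF m(1) n(1)]
    by (auto simp: a_eq_a_iff[OF n(1) m(1)] b_eq_b_iff[OF n(1) m(1)])
qed

lemma P5_off_T5_diagonal_unique:
  assumes "(x, y) \<in> P5 - T5" "(x', y') \<in> P5 - T5" "int x - int y = int x' - int y'"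
  shows "x = x'"
proof -
  obtain n where n: "n \<ge> 1" "(x, y) = (a n, b n) \<or> (x, y) = (b n, a n)"
    using assms(1) mem_P5_off_T5 by blast
  obtain m where m: "m \<ge> 1" "(x', y') = (a m, b m) \<or> (x', y') = (b m, a m)"
    using assms(2) mem_P5_off_T5 by blast
  from n(2) m(2) show ?thesis
    using assms(3) by (auto simp: b_eq_a_plus[OF n(1)] b_eq_a_plus[OF m(1)])
qed

lemma P5_off_T5_column_unique:
  "(x, y) \<in> P5 - T5 \<Longrightarrow> (x, v) \<in> P5 - T5 \<Longrightarrow> v = y"
  using P5_off_T5_row_unique[of y x v] swap_mem_P5[of "(x, y)"] swap_mem_P5[of "(x, v)"]
  by (simp add: add.commute)

lemma moves_from_P5_off_T5_avoid_T5:
  assumes p: "(x, y) \<in> P5 - T5" and q: "q \<in> moves (x, y)"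
  shows "q \<notin> T5"
proof -
  obtain n where n: "n \<ge> 1" "(x, y) = (a n, b n) \<or> (x, y) = (b n, a n)"
    using p mem_P5_off_T5 by blast
  then have "6 \<le> x" "6 \<le> y" "x + 6 \<le> y \<or> y + 6 \<le> x"
    using a_ge[OF n(1)] b_eq_a_plus[OF n(1)] by auto
  then show ?thesis
    using q p by (auto simp: mem_moves)
qed

lemma no_move_within_P5:
  assumes p: "p \<in> P5" and q: "q \<in> moves p"
  shows "q \<notin> P5"
proof
  assume "q \<in> P5"
  obtain x y where xy: "p = (x, y)"
    by (cases p)
  have p_off: "(x, y) \<in> P5 - T5"
    using p q xy by (auto simp: moves_def)
  then have q_off: "q \<in> P5 - T5"
    using \<open>q \<in> P5\<close> q xy moves_from_P5_off_T5_avoid_T5 by blast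
  consider (row) u where "u < x" "q = (u, y)" | (column) v where "v < y" "q = (x, v)"
    | (diagonal) t where "1 \<le> t" "t \<le> min x y" "q = (x - t, y - t)"
    using q xy p_off mem_moves by blast
  then show False
  proof cases
    case row
    then show False
      using P5_off_T5_row_unique p_off q_off by blast
  next
    case column
    then show False
      using P5_off_T5_column_unique p_off q_off by blast
  next
    case diagonal
    then have "x = x - t"
      using P5_off_T5_diagonal_unique[of x y "x - t" "y - t"] p_off q_off by simp
    then show False
      using diagonal by simp
  qed
qed

lemma move_into_P5_if_le:
  assumes off: "(x, y) \<notin> P5" and le: "x \<le> y"
  shows "\<exists>q\<in>moves (x, y). q \<in> P5"
proof -
  have off_T5: "(x, y) \<notin> T5"
    using off by (auto simp: P5_def)
  have a_b_mem: "(a k, b k) \<in> P5" "(b k, a k) \<in> P5" if "k \<ge> 1" for k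
    using that by (auto simp: P5_def)
  show ?thesis
  proof (cases "x \<le> 5")
    case True
    then have "(x, 0) \<in> moves (x, y)" "(x, 0) \<in> P5"
      using off_T5 by (auto simp: mem_moves P5_def)
    then show ?thesis
      by blast
  next
    case False
    then obtain k where k: "k \<ge> 1" "x = a k \<or> x = b k"
      using ge_6_eq_a_or_b[of x] by auto
    have b_k: "b k = a k + k + 5"
      using b_eq_a_plus[OF k(1)] .
    consider "x = b k" | "x = a k" "b k < y" | "x = a k" "y < b k" "y - x \<le> 5"
      | "x = a k" "y < b k" "5 < y - x"
      using k off a_b_mem by fastforce
    then show ?thesis
    proof cases
      case 1
      then have "(x, a k) \<in> moves (x, y)"
        using off_T5 le b_k by (auto simp: mem_moves)
      then show ?thesis
        using 1 a_b_mem[OF k(1)] by blast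
    next
      case 2
      then have "(x, b k) \<in> moves (x, y)"
        using off_T5 by (auto simp: mem_moves)
      then show ?thesis
        using 2 a_b_mem[OF k(1)] by blast
    next
      case 3
      have "(x - x, y - x) \<in> moves (x, y)"
        using diagonal_mem_moves[OF off_T5, of x] le False by simp
      moreover have "(x - x, y - x) \<in> P5"
        using 3 by (simp add: P5_def)
      ultimately show ?thesis
        by blast
    next
      case 4
      define m where "m = y - x - 5"
      have m: "1 \<le> m" "m < k"
        using 4 b_k m_def by auto
      have "a m < a k"
        using a_less_a_iff m k(1) by simp
      define t where "t = a k - a m"
      have "(x - t, y - t) \<in> moves (x, y)"
        using diagonal_mem_moves[OF off_T5, of t] le \<open>a m < a k\<close> 4 by (simp add: t_def)
      moreover have "(x - t, y - t) = (a m, b m)"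
        using 4 \<open>a m < a k\<close> b_eq_a_plus[OF m(1)] le by (simp add: t_def m_def)
      ultimately show ?thesis
        using a_b_mem[OF m(1)] by metis
    qed
  qed
qed

lemma move_into_P5:
  assumes off: "p \<notin> P5"
  shows "\<exists>q\<in>moves p. q \<in> P5"
proof -
  obtain x y where p: "p = (x, y)"
    by (cases p)
  show ?thesis
  proof (cases "x \<le> y")
    case True
    then show ?thesis
      using move_into_P5_if_le off p by blast
  next
    case False
    have "(y, x) \<notin> P5"
      using off p swap_mem_P5[of p] by simp
    then obtain q where "q \<in> moves (y, x)" "q \<in> P5"
      using move_into_P5_if_le[of y x] False by auto
    then show ?thesis
      using swap_mem_moves_swap[of "prod.swap q" p] swap_mem_P5[of q] p by auto
  qed
qed

theorem theorem4p9:
  shows "{p. isP p} = T5 \<union> {(b n, a n) | n. n \<ge> 1} \<union> {(a n, b n) | n. n \<ge> 1}"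
proof -
  have "isP p \<longleftrightarrow> p \<in> P5" for p
    using no_move_within_P5 move_into_P5 by (rule isP_iff_in_kernel)
  then show ?thesis
    unfolding P5_def by blast
qed

end
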